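(* Let $d>2$ be even and let $H$ be a $d\times d$ complex Hadamard matrix. Let $H'$ be the dephased form of $H$. Suppose $H'$ has $m$ pairwise disjoint ER pairs of columns, where $1\le m<d/2$. Then $H$ belongs to an $m$-dimensional affine family: there exist $m$ linearly independent real $d\times d$ matrices $R_1,\dots,R_m$, each with zero first row and zero first column, such that $H'\circ\exp\!\big(i\sum_{k=1}^m \xi_k R_k\big)$ is a complex Hadamard matrix for every $(\xi_1,\dots,\xi_m)\in\mathbb{R}^m$.
   Context: A $d\times d$ complex Hadamard matrix is a matrix $H$ all of whose entries have modulus $1$ and whose columns are pairwise orthogonal (equivalently $HH^*=dI$). It is dephased if every entry of its first row and first column equals $1$; every complex Hadamard matrix $H$ can be written uniquely as $D_1H'D_2$ with $D_1,D_2$ diagonal unitary and $H'$ dephased, and $H'$ is called the dephased form of $H$. Two distinct columns $C_A,C_B$ of a complex Hadamard matrix form an ER (equivalent to real) pair if $\overline{(C_A)_j}(C_B)_j\in\{1,-1\}$ for every row index $j=0,\dots,d-1$. For matrices $A,B$ of equal size, $A\circ B$ is the entrywise (Hadamard) product and $\exp(iR)$ denotes the entrywise exponential $(\exp(iR))_{jk}=e^{iR_{jk}}$. *)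

theory Defs
  imports Complex_Main
begin

text \<open>Square matrices of size d are represented as functions nat => nat => complex;
  only the entries with indices below d are meaningful. Rows/columns are indexed 0..d-1.\<close>

definition is_CHM :: "nat \<Rightarrow> (nat \<Rightarrow> nat \<Rightarrow> complex) \<Rightarrow> bool" where
  "is_CHM d H \<longleftrightarrow>
     (\<forall>j<d. \<forall>k<d. norm (H j k) = 1) \<and>
     (\<forall>k<d. \<forall>l<d. k \<noteq> l \<longrightarrow> (\<Sum>j<d. cnj (H j k) * H j l) = 0)"

definition dephased :: "nat \<Rightarrow> (nat \<Rightarrow> nat \<Rightarrow> complex) \<Rightarrow> bool" where
  "dephased d H \<longleftrightarrow> (\<forall>k<d. H 0 k = 1) \<and> (\<forall>j<d. H j 0 = 1)"

definition dephased_form_of ::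
  "nat \<Rightarrow> (nat \<Rightarrow> nat \<Rightarrow> complex) \<Rightarrow> (nat \<Rightarrow> nat \<Rightarrow> complex) \<Rightarrow> bool" where
  "dephased_form_of d H H' \<longleftrightarrow>
     is_CHM d H' \<and> dephased d H' \<and>
     (\<exists>D1 D2 :: nat \<Rightarrow> complex.
        (\<forall>j<d. norm (D1 j) = 1) \<and> (\<forall>k<d. norm (D2 k) = 1) \<and>
        (\<forall>j<d. \<forall>k<d. H j k = D1 j * H' j k * D2 k))"

definition ER_pair :: "nat \<Rightarrow> (nat \<Rightarrow> nat \<Rightarrow> complex) \<Rightarrow> nat \<Rightarrow> nat \<Rightarrow> bool" where
  "ER_pair d H a b \<longleftrightarrow> a < d \<and> b < d \<and> a \<noteq> b \<and>
     (\<forall>j<d. cnj (H j a) * H j b \<in> {1, -1})"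

end

theory Submission
  imports Defs "HOL-Library.Disjoint_Sets"
begin

text \<open>Let \<open>\<epsilon>\<^sub>k(j) = \<plusminus>1\<close> be the sign relating the columns \<open>a\<^sub>k\<close> and \<open>b\<^sub>k\<close> of \<open>H'\<close> in row \<open>j\<close>.
  Multiplying both columns of one ER pair by a phase that depends on \<open>j\<close> only through
  \<open>\<epsilon>\<^sub>k(j)\<close> keeps the matrix Hadamard: such a phase has the form \<open>A + B \<epsilon>\<^sub>k(j)\<close>, so the new
  columns are \<open>A H\<^sub>a + B H\<^sub>b\<close> and \<open>A H\<^sub>b + B H\<^sub>a\<close>, still orthogonal to every other column, and
  orthogonal to each other because they carry the same phases. Doing this independently on
  the disjoint pairs, with phase \<open>exp (i \<xi>\<^sub>k)\<close> exactly where \<open>\<epsilon>\<^sub>k = -1\<close>, gives the family; up to a row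
  phase \<open>R\<^sub>k\<close> is the indicator of \<open>{\<epsilon>\<^sub>k = -1} \<times> {a\<^sub>k, b\<^sub>k}\<close>. The \<open>R\<^sub>k\<close> are independent since a
  column outside all pairs exists (\<open>2m < d\<close>) and every \<open>\<epsilon>\<^sub>k\<close> takes the value \<open>-1\<close>, as
  \<open>\<Sum>\<^sub>j \<epsilon>\<^sub>k(j) = 0\<close> by orthogonality.\<close>

lemma cnj_mult_self_of_norm_1: "norm (z::complex) = 1 \<Longrightarrow> cnj z * z = 1"
  by (metis complex_norm_square mult.commute of_real_1 power_one)

lemma orthogonal_sym:
  fixes x y :: "nat \<Rightarrow> complex"
  assumes "(\<Sum>j<d. cnj (x j) * y j) = 0"
  shows "(\<Sum>j<d. cnj (y j) * x j) = 0"
proof -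
  have "(\<Sum>j<d. cnj (y j) * x j) = cnj (\<Sum>j<d. cnj (x j) * y j)"
    by (simp add: mult.commute)
  with assms show ?thesis by simp
qed

lemma orthogonal_sign_dependent_factor:
  fixes x y \<epsilon> :: "nat \<Rightarrow> complex"
  assumes sign: "\<forall>j<d. \<epsilon> j = 1 \<or> \<epsilon> j = -1"
    and orth: "(\<Sum>j<d. cnj (x j) * y j) = 0"
    and orth_signed: "(\<Sum>j<d. cnj (x j * \<epsilon> j) * y j) = 0"
  shows "(\<Sum>j<d. cnj (x j * (if \<epsilon> j = 1 then u else v)) * y j) = 0"
proof -
  have "(\<Sum>j<d. cnj (x j * (if \<epsilon> j = 1 then u else v)) * y j)
      = (\<Sum>j<d. cnj ((u + v) / 2) * (cnj (x j) * y j) + cnj ((u - v) / 2) * (cnj (x j * \<epsilon> j) * y j))"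
    using sign by (intro sum.cong) (auto simp: field_simps)
  also have "\<dots> = cnj ((u + v) / 2) * (\<Sum>j<d. cnj (x j) * y j)
                 + cnj ((u - v) / 2) * (\<Sum>j<d. cnj (x j * \<epsilon> j) * y j)"
    by (simp add: sum.distrib sum_distrib_left)
  finally show ?thesis using orth orth_signed by simp
qed

lemma is_CHM_row_phase:
  assumes "is_CHM d H" and "\<forall>j<d. norm (u j) = 1"
  shows "is_CHM d (\<lambda>j l. H j l * u j)"
  unfolding is_CHM_def
proof (intro conjI allI impI)
  fix j l assume "j < d" "l < d"
  then show "norm (H j l * u j) = 1"
    using assms unfolding is_CHM_def by (simp add: norm_mult)
next
  fix k l assume kl: "k < d" "l < d" "k \<noteq> l"
  have "(\<Sum>j<d. cnj (H j k * u j) * (H j l * u j)) = (\<Sum>j<d. cnj (H j k) * H j l * (cnj (u j) * u j))"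
    by (simp add: ac_simps)
  also have "\<dots> = (\<Sum>j<d. cnj (H j k) * H j l)"
    using assms(2) by (intro sum.cong) (simp_all add: cnj_mult_self_of_norm_1)
  finally show "(\<Sum>j<d. cnj (H j k * u j) * (H j l * u j)) = 0"
    using assms(1) kl unfolding is_CHM_def by simp
qed

definition pair_sign :: "(nat \<Rightarrow> nat \<Rightarrow> complex) \<Rightarrow> nat \<Rightarrow> nat \<Rightarrow> nat \<Rightarrow> complex" where
  "pair_sign H a b j = cnj (H j a) * H j b"

definition pair_twist ::
  "complex \<Rightarrow> complex \<Rightarrow> nat \<Rightarrow> nat \<Rightarrow> (nat \<Rightarrow> nat \<Rightarrow> complex) \<Rightarrow> nat \<Rightarrow> nat \<Rightarrow> complex" where
  "pair_twist u v a b H j l =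
     (if l = a \<or> l = b then H j l * (if pair_sign H a b j = 1 then u else v) else H j l)"

lemma pair_sign_cases:
  "ER_pair d H a b \<Longrightarrow> j < d \<Longrightarrow> pair_sign H a b j = 1 \<or> pair_sign H a b j = -1"
  unfolding ER_pair_def pair_sign_def by auto

lemma ER_pair_column_mult_sign:
  assumes "is_CHM d H" and "ER_pair d H a b" and "j < d" and "l = a \<or> l = b"
  shows "H j l * pair_sign H a b j = H j (if l = a then b else a)"
proof -
  have "a < d" "a \<noteq> b" using assms(2) unfolding ER_pair_def by auto
  then have unit: "cnj (H j a) * H j a = 1"
    using assms(1,3) unfolding is_CHM_def by (simp add: cnj_mult_self_of_norm_1)
  have a_to_b: "H j a * pair_sign H a b j = H j b"
    using unit by (simp add: pair_sign_def mult.assoc[symmetric] mult.commute[of "H j a"])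
  have "pair_sign H a b j * pair_sign H a b j = 1"
    using pair_sign_cases[OF assms(2,3)] by auto
  then have b_to_a: "H j b * pair_sign H a b j = H j a"
    using a_to_b by (metis mult.assoc mult_1_right)
  show ?thesis
    using a_to_b b_to_a assms(4) \<open>a \<noteq> b\<close> by auto
qed

lemma is_CHM_pair_twist:
  assumes chm: "is_CHM d H" and er: "ER_pair d H a b"
    and "norm u = 1" and "norm v = 1"
  shows "is_CHM d (pair_twist u v a b H)"
proof -
  define f where "f j = (if pair_sign H a b j = 1 then u else v)" for j
  have f_norm: "\<forall>j<d. norm (f j) = 1"
    using assms(3,4) by (simp add: f_def)
  have twist: "pair_twist u v a b H = (\<lambda>j l. if l \<in> {a, b} then H j l * f j else H j l)"
    by (auto simp: fun_eq_iff pair_twist_def f_def)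
  have orth: "(\<Sum>j<d. cnj (H j k) * H j l) = 0" if "k < d" "l < d" "k \<noteq> l" for k l
    using chm that unfolding is_CHM_def by blast
  have pair_in: "a < d" "b < d" using er unfolding ER_pair_def by auto
  have mixed: "(\<Sum>j<d. cnj (H j k * f j) * H j l) = 0" if "k \<in> {a, b}" "l < d" "l \<notin> {a, b}" for k l
    unfolding f_def
  proof (rule orthogonal_sign_dependent_factor)
    show "\<forall>j<d. pair_sign H a b j = 1 \<or> pair_sign H a b j = -1"
      using pair_sign_cases[OF er] by blast
    show "(\<Sum>j<d. cnj (H j k) * H j l) = 0"
      using that pair_in by (intro orth) auto
    have "(\<Sum>j<d. cnj (H j k * pair_sign H a b j) * H j l)
        = (\<Sum>j<d. cnj (H j (if k = a then b else a)) * H j l)"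
      using that by (intro sum.cong) (simp_all add: ER_pair_column_mult_sign[OF chm er])
    also have "\<dots> = 0"
      using that pair_in by (intro orth) auto
    finally show "(\<Sum>j<d. cnj (H j k * pair_sign H a b j) * H j l) = 0" .
  qed
  have both: "(\<Sum>j<d. cnj (H j k * f j) * (H j l * f j)) = 0" if "k < d" "l < d" "k \<noteq> l" for k l
    using is_CHM_row_phase[OF chm f_norm] that unfolding is_CHM_def by blast
  show ?thesis
    unfolding is_CHM_def twist
  proof (intro conjI allI impI)
    fix j l assume "j < d" "l < d"
    then show "norm (if l \<in> {a, b} then H j l * f j else H j l) = 1"
      using chm f_norm unfolding is_CHM_def by (simp add: norm_mult)
  next
    fix k l assume kl: "k < d" "l < d" "k \<noteq> l"
    show "(\<Sum>j<d. cnj (if k \<in> {a, b} then H j k * f j else H j k)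
                 * (if l \<in> {a, b} then H j l * f j else H j l)) = 0"
      using both[OF kl] mixed[of k l] orthogonal_sym[OF mixed[of l k]] orth[OF kl] kl
      by (cases "k \<in> {a, b}"; cases "l \<in> {a, b}") simp_all
  qed
qed

definition sign_flip :: "(nat \<Rightarrow> nat \<Rightarrow> complex) \<Rightarrow> nat \<Rightarrow> nat \<Rightarrow> nat \<Rightarrow> real" where
  "sign_flip H a b j = (if pair_sign H a b j = 1 then 0 else 1)"

definition pair_indicator :: "nat \<Rightarrow> nat \<Rightarrow> nat \<Rightarrow> real" where
  "pair_indicator a b l = (if l = a \<or> l = b then 1 else 0)"

definition pair_phase ::
  "(nat \<Rightarrow> nat \<Rightarrow> complex) \<Rightarrow> (nat \<Rightarrow> nat) \<Rightarrow> (nat \<Rightarrow> nat) \<Rightarrow> nat \<Rightarrow> (nat \<Rightarrow> real) \<Rightarrow> nat \<Rightarrow> nat \<Rightarrow> real"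
  where "pair_phase H a b m \<theta> j l =
    (\<Sum>k<m. \<theta> k * sign_flip H (a k) (b k) j * pair_indicator (a k) (b k) l)"

lemma pair_phase_outside_pairs:
  assumes "\<forall>k<m. l \<noteq> a k \<and> l \<noteq> b k"
  shows "pair_phase H a b m \<theta> j l = 0"
  using assms by (simp add: pair_phase_def pair_indicator_def)

lemma pair_phase_Suc:
  "pair_phase H a b (Suc m) \<theta> j l
     = pair_phase H a b m \<theta> j l + \<theta> m * sign_flip H (a m) (b m) j * pair_indicator (a m) (b m) l"
  by (simp add: pair_phase_def)

lemma is_CHM_pair_phases:
  assumes chm: "is_CHM d H" and "\<forall>k<m. ER_pair d H (a k) (b k)"
    and "disjoint_family_on (\<lambda>k. {a k, b k}) {..<m}"
  shows "is_CHM d (\<lambda>j l. H j l * exp (\<i> * of_real (pair_phase H a b m \<theta> j l)))"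
  using assms(2,3)
proof (induction m)
  case 0
  show ?case using chm by (simp add: pair_phase_def)
next
  case (Suc m)
  define G where "G j l = H j l * exp (\<i> * of_real (pair_phase H a b m \<theta> j l))" for j l
  have chm_G: "is_CHM d G"
    unfolding G_def using Suc by (auto intro!: Suc.IH elim: disjoint_family_on_mono[rotated])
  have "\<forall>k<m. a m \<noteq> a k \<and> a m \<noteq> b k" "\<forall>k<m. b m \<noteq> a k \<and> b m \<noteq> b k"
    using Suc.prems(2) unfolding disjoint_family_on_def by fastforce+
  then have untouched: "G j (a m) = H j (a m)" "G j (b m) = H j (b m)" for j
    by (simp_all add: G_def pair_phase_outside_pairs)
  then have sign: "pair_sign G (a m) (b m) = pair_sign H (a m) (b m)"
    by (simp add: fun_eq_iff pair_sign_def)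
  have er_G: "ER_pair d G (a m) (b m)"
    using Suc.prems(1) untouched unfolding ER_pair_def by simp
  have "(\<lambda>j l. H j l * exp (\<i> * of_real (pair_phase H a b (Suc m) \<theta> j l)))
      = pair_twist 1 (exp (\<i> * of_real (\<theta> m))) (a m) (b m) G"
    by (auto simp: fun_eq_iff pair_twist_def pair_phase_Suc sign G_def sign_flip_def
        pair_indicator_def distrib_left exp_add)
  then show ?case
    using is_CHM_pair_twist[OF chm_G er_G] by simp
qed

lemma pair_phase_pair_column:
  assumes "disjoint_family_on (\<lambda>k. {a k, b k}) {..<m}" and "i < m"
  shows "pair_phase H a b m \<theta> j (a i) = \<theta> i * sign_flip H (a i) (b i) j"
proof -
  have "pair_phase H a b m \<theta> j (a i)
      = (\<Sum>k<m. if k = i then \<theta> i * sign_flip H (a i) (b i) j else 0)"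
    unfolding pair_phase_def pair_indicator_def
    using assms unfolding disjoint_family_on_def by (intro sum.cong) auto
  with assms(2) show ?thesis by simp
qed

lemma exists_column_outside_pairs:
  fixes a b :: "nat \<Rightarrow> nat"
  assumes "2 * m < d"
  shows "\<exists>l<d. \<forall>k<m. l \<noteq> a k \<and> l \<noteq> b k"
proof -
  have "card (\<Union>k<m. {a k, b k}) \<le> (\<Sum>k<m. card {a k, b k})"
    by (rule card_UN_le) simp
  also have "\<dots> \<le> (\<Sum>k<m. 2)"
    by (intro sum_mono) (simp add: card_insert_le_m1)
  finally have "card (\<Union>k<m. {a k, b k}) < card {..<d}"
    using assms by simp
  then have "\<not> {..<d} \<subseteq> (\<Union>k<m. {a k, b k})"
    by (meson card_mono finite_UN_I finite_insert finite_lessThan finite.emptyI not_le)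
  then show ?thesis by blast
qed

lemma exists_sign_flip:
  assumes chm: "is_CHM d H" and er: "ER_pair d H a b"
  shows "\<exists>j<d. sign_flip H a b j = 1"
proof (rule ccontr)
  assume "\<not> ?thesis"
  then have "\<forall>j<d. pair_sign H a b j = 1"
    by (metis sign_flip_def zero_neq_one)
  then have "(\<Sum>j<d. pair_sign H a b j) = of_nat d"
    by simp
  moreover have "(\<Sum>j<d. pair_sign H a b j) = 0"
    using chm er unfolding is_CHM_def ER_pair_def pair_sign_def by blast
  moreover have "d > 0"
    using er unfolding ER_pair_def by simp
  ultimately show False by simp
qed

text \<open>Subtracting the value at column 0 changes the phase of each row by a constant only,
  and makes the first column vanish.\<close>
definition ER_direction :: "(nat \<Rightarrow> nat \<Rightarrow> complex) \<Rightarrow> nat \<Rightarrow> nat \<Rightarrow> nat \<Rightarrow> nat \<Rightarrow> real" where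
  "ER_direction H a b j l = sign_flip H a b j * (pair_indicator a b l - pair_indicator a b 0)"

lemma sum_ER_direction:
  "(\<Sum>k<m. \<xi> k * ER_direction H (a k) (b k) j l)
     = pair_phase H a b m \<xi> j l - pair_phase H a b m \<xi> j 0"
  by (simp add: ER_direction_def pair_phase_def algebra_simps sum_subtractf)

lemma ER_direction_first_column: "ER_direction H a b j 0 = 0"
  by (simp add: ER_direction_def)

lemma ER_direction_first_row:
  assumes "dephased d H" and "ER_pair d H a b"
  shows "ER_direction H a b 0 l = 0"
  using assms by (simp add: dephased_def ER_pair_def ER_direction_def sign_flip_def pair_sign_def)

lemma is_CHM_ER_deformation:
  fixes a b :: "nat \<Rightarrow> nat"
  assumes chm: "is_CHM d H" and er: "\<forall>k<m. ER_pair d H (a k) (b k)"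
    and disj: "disjoint_family_on (\<lambda>k. {a k, b k}) {..<m}"
  shows "is_CHM d (\<lambda>j l. H j l * exp (\<i> * of_real (\<Sum>k<m. \<xi> k * ER_direction H (a k) (b k) j l)))"
proof -
  have "(\<lambda>j l. H j l * exp (\<i> * of_real (\<Sum>k<m. \<xi> k * ER_direction H (a k) (b k) j l)))
      = (\<lambda>j l. H j l * exp (\<i> * of_real (pair_phase H a b m \<xi> j l))
               * exp (\<i> * of_real (- pair_phase H a b m \<xi> j 0)))"
    by (simp add: fun_eq_iff sum_ER_direction right_diff_distrib exp_diff exp_minus divide_inverse)
  moreover have "\<forall>j<d. norm (exp (\<i> * of_real (- pair_phase H a b m \<xi> j 0))) = 1"
    by simp
  ultimately show ?thesis
    using is_CHM_row_phase[OF is_CHM_pair_phases[OF chm er disj]] by simp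
qed

lemma ER_directions_independent:
  fixes a b :: "nat \<Rightarrow> nat"
  assumes chm: "is_CHM d H" and er: "\<forall>k<m. ER_pair d H (a k) (b k)"
    and disj: "disjoint_family_on (\<lambda>k. {a k, b k}) {..<m}" and "2 * m < d"
    and zero: "\<forall>j<d. \<forall>l<d. (\<Sum>k<m. c k * ER_direction H (a k) (b k) j l) = 0"
    and "i < m"
  shows "c i = 0"
proof -
  obtain j where j: "j < d" "sign_flip H (a i) (b i) j = 1"
    using exists_sign_flip[OF chm] er \<open>i < m\<close> by blast
  obtain l where l: "l < d" "\<forall>k<m. l \<noteq> a k \<and> l \<noteq> b k"
    using exists_column_outside_pairs[OF \<open>2 * m < d\<close>] by blast
  have "a i < d" using er \<open>i < m\<close> unfolding ER_pair_def by blast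
  have "c i = pair_phase H a b m c j (a i) - pair_phase H a b m c j l"
    using j l by (simp add: pair_phase_pair_column[OF disj \<open>i < m\<close>] pair_phase_outside_pairs)
  also have "\<dots> = (\<Sum>k<m. c k * ER_direction H (a k) (b k) j (a i))
                 - (\<Sum>k<m. c k * ER_direction H (a k) (b k) j l)"
    by (simp add: sum_ER_direction)
  also have "\<dots> = 0"
    using zero j l \<open>a i < d\<close> by simp
  finally show ?thesis .
qed

theorem theorem1:
  fixes d m :: nat and H H' :: "nat \<Rightarrow> nat \<Rightarrow> complex" and a b :: "nat \<Rightarrow> nat"
  assumes "even d" and "d > 2"
    and "is_CHM d H"
    and "dephased_form_of d H H'"
    and "1 \<le> m" and "2 * m < d"
    and "\<forall>i<m. ER_pair d H' (a i) (b i)"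
    and "inj_on a {..<m}" and "inj_on b {..<m}"
    and "a ` {..<m} \<inter> b ` {..<m} = {}"
  shows "\<exists>R :: nat \<Rightarrow> nat \<Rightarrow> nat \<Rightarrow> real.
           (\<forall>k<m. \<forall>j<d. R k 0 j = 0 \<and> R k j 0 = 0) \<and>
           (\<forall>c :: nat \<Rightarrow> real.
              (\<forall>j<d. \<forall>l<d. (\<Sum>k<m. c k * R k j l) = 0) \<longrightarrow> (\<forall>k<m. c k = 0)) \<and>
           (\<forall>\<xi> :: nat \<Rightarrow> real.
              is_CHM d (\<lambda>j l. H' j l * exp (\<i> * complex_of_real (\<Sum>k<m. \<xi> k * R k j l))))"
proof -
  have chm: "is_CHM d H'" and dep: "dephased d H'"
    using assms(4) unfolding dephased_form_of_def by auto
  have er: "\<forall>k<m. ER_pair d H' (a k) (b k)"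
    using assms(7) .
  have disj: "disjoint_family_on (\<lambda>k. {a k, b k}) {..<m}"
    using assms(8-10) unfolding disjoint_family_on_def inj_on_def by blast
  define R where "R k = ER_direction H' (a k) (b k)" for k
  show ?thesis
  proof (intro exI[of _ R] conjI)
    show "\<forall>k<m. \<forall>j<d. R k 0 j = 0 \<and> R k j 0 = 0"
      using er by (simp add: R_def ER_direction_first_row[OF dep] ER_direction_first_column)
    show "\<forall>c. (\<forall>j<d. \<forall>l<d. (\<Sum>k<m. c k * R k j l) = 0) \<longrightarrow> (\<forall>k<m. c k = 0)"
      using ER_directions_independent[OF chm er disj assms(6)] unfolding R_def by blast
    show "\<forall>\<xi>. is_CHM d (\<lambda>j l. H' j l * exp (\<i> * of_real (\<Sum>k<m. \<xi> k * R k j l)))"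
      unfolding R_def using is_CHM_ER_deformation[OF chm er disj] by blast
  qed
qed

end
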